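(* Let $b_1,\dots,b_m$ be background frames and $f$ a foreground frame, with a distance $d$ satisfying the triangle inequality and $d(b_j,b_{j+1})\le\delta$ for all $1\le j<m$. Suppose $b_i$ is a strong match for $f$, with $d(f,b_i)$ uniformly distributed on $[0,\Psi]$, and let $\gamma\ge0$ be an integer with $1\le i-\gamma$ and $i+\gamma\le m$. Then the expected number of strong matches for $f$ among $b_{i-\gamma},\dots,b_{i+\gamma}$ is at least $2(\gamma+1)\left(1-\frac{\delta\gamma}{2\Psi}\right)-1$.
   Context: A background frame $b$ is a strong match for a foreground frame $f$ if $d(f,b)\le\Psi$, where $\Psi>0$ is a fixed threshold. Randomized model: given that $\{f,b\}$ is a strong match, the distance $d(f,b)$ is modeled as a sample from the uniform distribution on $[0,\Psi]$. *)

theory Defs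
  imports "HOL-Probability.Probability"
begin

definition strong_match :: "('a \<Rightarrow> 'a \<Rightarrow> real) \<Rightarrow> real \<Rightarrow> 'a \<Rightarrow> 'a \<Rightarrow> bool" where
  "strong_match d \<Psi> f b \<longleftrightarrow> d f b \<le> \<Psi>"

definition num_strong_matches ::
  "('a \<Rightarrow> 'a \<Rightarrow> real) \<Rightarrow> real \<Rightarrow> 'a \<Rightarrow> (nat \<Rightarrow> 'a) \<Rightarrow> nat set \<Rightarrow> nat" where
  "num_strong_matches d \<Psi> f b J = card {j \<in> J. strong_match d \<Psi> f (b j)}"

end

theory Submission
  imports Defs
begin

text \<open>Along the chain of background frames each step moves by at most \<delta>, so by the
  triangle inequality d(f, b j) \<le> d(f, b i) + |j - i| \<delta>. Hence b j is a strong match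
  whenever d(f, b i) \<le> \<Psi> - |j - i| \<delta>, an event of probability at least
  1 - |j - i| \<delta> / \<Psi> under the uniform model. By linearity of expectation the expected
  number of strong matches is at least the sum over |j - i| \<le> \<gamma> of these bounds, which is
  (2\<gamma> + 1) - \<gamma>(\<gamma> + 1) \<delta> / \<Psi>.\<close>

lemma dist_nonneg_of_sym_triangle:
  fixes d :: "'a \<Rightarrow> 'a \<Rightarrow> real"
  assumes sym: "\<And>x y. d x y = d y x"
    and tri: "\<And>x y z. d x z \<le> d x y + d y z"
  shows "d x y \<ge> 0"
  using tri[where x=x and y=x and z=x] tri[where x=x and y=y and z=x] sym[of x y] by linarith

lemma dist_to_chain_mono_up:
  fixes d :: "'a \<Rightarrow> 'a \<Rightarrow> real" and x :: "nat \<Rightarrow> 'a"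
  assumes tri: "\<And>x y z. d x z \<le> d x y + d y z"
    and step: "\<And>j. lo \<le> j \<Longrightarrow> j < hi \<Longrightarrow> d (x j) (x (j + 1)) \<le> \<delta>"
    and lo: "lo \<le> j" and "j \<le> k" "k \<le> hi"
  shows "d p (x k) \<le> d p (x j) + real (k - j) * \<delta>"
  using \<open>j \<le> k\<close> \<open>k \<le> hi\<close>
proof (induction k rule: dec_induct)
  case (step k)
  have "d p (x (Suc k)) \<le> d p (x k) + d (x k) (x (k + 1))"
    using tri by simp
  moreover have "d (x k) (x (k + 1)) \<le> \<delta>"
    using lo step.hyps step.prems by (intro assms(2)) auto
  ultimately show ?case
    using step.IH step.prems step.hyps by (simp add: Suc_diff_le algebra_simps)
qed simp

lemma dist_to_chain_mono_down:
  fixes d :: "'a \<Rightarrow> 'a \<Rightarrow> real" and x :: "nat \<Rightarrow> 'a"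
  assumes sym: "\<And>x y. d x y = d y x"
    and tri: "\<And>x y z. d x z \<le> d x y + d y z"
    and step: "\<And>j. lo \<le> j \<Longrightarrow> j < hi \<Longrightarrow> d (x j) (x (j + 1)) \<le> \<delta>"
    and lo: "lo \<le> j" and "j \<le> k" "k \<le> hi"
  shows "d p (x j) \<le> d p (x k) + real (k - j) * \<delta>"
  using \<open>j \<le> k\<close> \<open>k \<le> hi\<close>
proof (induction k rule: dec_induct)
  case (step k)
  have "d p (x k) \<le> d p (x (k + 1)) + d (x (k + 1)) (x k)"
    by (rule tri)
  also have "d (x (k + 1)) (x k) = d (x k) (x (k + 1))"
    by (rule sym)
  finally have "d p (x k) \<le> d p (x (k + 1)) + d (x k) (x (k + 1))" .
  moreover have "d (x k) (x (k + 1)) \<le> \<delta>"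
    using lo step.hyps step.prems by (intro assms(3)) auto
  ultimately show ?case
    using step.IH step.prems step.hyps by (simp add: Suc_diff_le algebra_simps)
qed simp

lemma dist_to_chain_le:
  fixes d :: "'a \<Rightarrow> 'a \<Rightarrow> real" and x :: "nat \<Rightarrow> 'a"
  assumes sym: "\<And>x y. d x y = d y x"
    and tri: "\<And>x y z. d x z \<le> d x y + d y z"
    and step: "\<And>j. lo \<le> j \<Longrightarrow> j < hi \<Longrightarrow> d (x j) (x (j + 1)) \<le> \<delta>"
    and "lo \<le> i" "i \<le> hi" "lo \<le> j" "j \<le> hi"
  shows "d p (x j) \<le> d p (x i) + \<bar>real j - real i\<bar> * \<delta>"
proof (cases "j \<le> i")
  case True
  then show ?thesis
    using dist_to_chain_mono_down[where x=x and lo=lo and hi=hi, OF sym tri step, of j i p] assms(5,6)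
    by (simp add: of_nat_diff)
next
  case False
  then show ?thesis
    using dist_to_chain_mono_up[where x=x and lo=lo and hi=hi, OF tri step, of i j p] assms(4,7)
    by (simp add: of_nat_diff)
qed

lemma sum_abs_diff_centered:
  fixes i \<gamma> :: nat
  assumes "\<gamma> \<le> i"
  shows "(\<Sum>j\<in>{i - \<gamma>..i + \<gamma>}. \<bar>real j - real i\<bar>) = real \<gamma> * (real \<gamma> + 1)"
  using assms
proof (induction \<gamma>)
  case (Suc g)
  have "{i - Suc g..i + Suc g} = insert (i - Suc g) (insert (i + Suc g) {i - g..i + g})"
    using Suc.prems by auto
  moreover have "\<bar>real (i - Suc g) - real i\<bar> = real (Suc g)"
    and "\<bar>real (i + Suc g) - real i\<bar> = real (Suc g)"
    using Suc.prems by (simp_all add: of_nat_diff)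
  moreover have "i - Suc g \<notin> insert (i + Suc g) {i - g..i + g}"
    and "i + Suc g \<notin> {i - g..i + g}"
    using Suc.prems by auto
  ultimately have "(\<Sum>j\<in>{i - Suc g..i + Suc g}. \<bar>real j - real i\<bar>)
      = 2 * real (Suc g) + (\<Sum>j\<in>{i - g..i + g}. \<bar>real j - real i\<bar>)"
    by (simp del: of_nat_Suc)
  then show ?case
    using Suc by (simp add: algebra_simps)
qed simp

lemma sum_one_minus_abs_diff_centered:
  fixes i \<gamma> :: nat and c :: real
  assumes "\<gamma> \<le> i"
  shows "(\<Sum>j\<in>{i - \<gamma>..i + \<gamma>}. 1 - \<bar>real j - real i\<bar> * c)
    = 2 * (real \<gamma> + 1) * (1 - c * real \<gamma> / 2) - 1"
proof -
  have "(\<Sum>j\<in>{i - \<gamma>..i + \<gamma>}. 1 - \<bar>real j - real i\<bar> * c)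
      = real (card {i - \<gamma>..i + \<gamma>}) - (\<Sum>j\<in>{i - \<gamma>..i + \<gamma>}. \<bar>real j - real i\<bar>) * c"
    by (simp add: sum_subtractf sum_distrib_right)
  also have "\<dots> = real (2 * \<gamma> + 1) - real \<gamma> * (real \<gamma> + 1) * c"
    using assms by (simp add: sum_abs_diff_centered)
  finally show ?thesis
    by (simp add: algebra_simps)
qed

lemma (in prob_space) expectation_card_eq_sum_prob:
  assumes "finite J" and "\<And>j. j \<in> J \<Longrightarrow> A j \<in> events"
  shows "expectation (\<lambda>\<omega>. real (card {j \<in> J. \<omega> \<in> A j})) = (\<Sum>j\<in>J. prob (A j))"
proof -
  have "expectation (\<lambda>\<omega>. real (card {j \<in> J. \<omega> \<in> A j}))
      = expectation (\<lambda>\<omega>. \<Sum>j\<in>J. indicator (A j) \<omega>)"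
    using assms(1) by (simp add: indicator_def of_bool_def sum.If_cases Int_def)
  also have "\<dots> = (\<Sum>j\<in>J. prob (A j))"
    using assms by (subst Bochner_Integration.integral_sum)
      (auto simp: less_top[symmetric] intro!: integrable_real_indicator)
  finally show ?thesis .
qed

lemma (in prob_space) uniform_cdf_lower_bound:
  assumes "\<Psi> > 0"
    and X: "X \<in> borel_measurable M"
    and unif: "distr M lborel X = uniform_measure lborel {0..\<Psi>}"
    and "t \<le> \<Psi>"
  shows "t / \<Psi> \<le> prob {\<omega> \<in> space M. X \<omega> \<le> t}"
proof (cases "t < 0")
  case True
  then have "t / \<Psi> < 0"
    using \<open>\<Psi> > 0\<close> by (rule divide_neg_pos)
  then show ?thesis
    using measure_nonneg[of M "{\<omega> \<in> space M. X \<omega> \<le> t}"] by linarith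
next
  case False
  have "prob {\<omega> \<in> space M. X \<omega> \<le> t} = measure (distr M lborel X) {..t}"
    using X by (subst measure_distr) (auto simp: vimage_def Int_def conj_commute)
  also have "\<dots> = measure lborel ({0..\<Psi>} \<inter> {..t}) / \<Psi>"
    unfolding unif using \<open>\<Psi> > 0\<close> by (subst measure_uniform_measure) auto
  also have "{0..\<Psi>} \<inter> {..t} = {0..t}"
    using \<open>t \<le> \<Psi>\<close> by auto
  finally show ?thesis
    using False by simp
qed

lemma (in prob_space) prob_within_shift_of_uniform:
  assumes "\<Psi> > 0" "s \<ge> 0"
    and X: "X \<in> borel_measurable M"
    and unif: "distr M lborel X = uniform_measure lborel {0..\<Psi>}"
    and Y: "Y \<in> borel_measurable M"
    and close: "\<And>\<omega>. \<omega> \<in> space M \<Longrightarrow> Y \<omega> \<le> X \<omega> + s"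
  shows "1 - s / \<Psi> \<le> prob {\<omega> \<in> space M. Y \<omega> \<le> \<Psi>}"
proof -
  have "1 - s / \<Psi> = (\<Psi> - s) / \<Psi>"
    using \<open>\<Psi> > 0\<close> by (simp add: diff_divide_distrib)
  also have "\<dots> \<le> prob {\<omega> \<in> space M. X \<omega> \<le> \<Psi> - s}"
    using uniform_cdf_lower_bound[OF \<open>\<Psi> > 0\<close> X unif] \<open>s \<ge> 0\<close> by simp
  also have "\<dots> \<le> prob {\<omega> \<in> space M. Y \<omega> \<le> \<Psi>}"
    using close by (intro finite_measure_mono) (fastforce, measurable, rule Y)
  finally show ?thesis .
qed

theorem lemma3p5:
  fixes M :: "'w measure"
    and d :: "'a \<Rightarrow> 'a \<Rightarrow> real"
    and f :: "'w \<Rightarrow> 'a" and b :: "'w \<Rightarrow> nat \<Rightarrow> 'a"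
    and \<Psi> \<delta> :: real and m i \<gamma> :: nat
  assumes "prob_space M"
    and "\<Psi> > 0"
    and sym: "\<And>x y. d x y = d y x"
    and tri: "\<And>x y z. d x z \<le> d x y + d y z"
    and step: "\<And>\<omega> j. \<omega> \<in> space M \<Longrightarrow> 1 \<le> j \<Longrightarrow> j < m \<Longrightarrow> d (b \<omega> j) (b \<omega> (j + 1)) \<le> \<delta>"
    and strong: "\<And>\<omega>. \<omega> \<in> space M \<Longrightarrow> strong_match d \<Psi> (f \<omega>) (b \<omega> i)"
    and meas: "\<And>j. (\<lambda>\<omega>. d (f \<omega>) (b \<omega> j)) \<in> borel_measurable M"
    and unif: "distr M lborel (\<lambda>\<omega>. d (f \<omega>) (b \<omega> i)) = uniform_measure lborel {0..\<Psi>}"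
    and "1 \<le> i - \<gamma>" and "\<gamma> \<le> i"
    and "i + \<gamma> \<le> m"
  shows "prob_space.expectation M
           (\<lambda>\<omega>. real (num_strong_matches d \<Psi> (f \<omega>) (b \<omega>) {i - \<gamma>..i + \<gamma>}))
         \<ge> 2 * (real \<gamma> + 1) * (1 - \<delta> * real \<gamma> / (2 * \<Psi>)) - 1"
proof -
  interpret prob_space M by fact
  define J where "J = {i - \<gamma>..i + \<gamma>}"
  define A where "A j = {\<omega> \<in> space M. d (f \<omega>) (b \<omega> j) \<le> \<Psi>}" for j
  have delta_nonneg: "\<delta> \<ge> 0" if "\<gamma> \<noteq> 0"
  proof -
    obtain \<omega> where "\<omega> \<in> space M"
      using not_empty by blast
    then have "d (b \<omega> (i - \<gamma>)) (b \<omega> (i - \<gamma> + 1)) \<le> \<delta>"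
      using that \<open>1 \<le> i - \<gamma>\<close> \<open>i + \<gamma> \<le> m\<close> by (intro step) auto
    then show ?thesis
      by (rule order_trans[OF dist_nonneg_of_sym_triangle[OF sym tri]])
  qed
  have "2 * (real \<gamma> + 1) * (1 - \<delta> * real \<gamma> / (2 * \<Psi>)) - 1
      = (\<Sum>j\<in>J. 1 - \<bar>real j - real i\<bar> * \<delta> / \<Psi>)"
    using sum_one_minus_abs_diff_centered[OF \<open>\<gamma> \<le> i\<close>, of "\<delta> / \<Psi>"] by (simp add: J_def)
  also have "\<dots> \<le> (\<Sum>j\<in>J. prob (A j))"
  proof (rule sum_mono, unfold A_def, rule prob_within_shift_of_uniform[OF \<open>\<Psi> > 0\<close> _ meas unif meas])
    fix j assume "j \<in> J"
    then show "0 \<le> \<bar>real j - real i\<bar> * \<delta>"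
      using delta_nonneg by (cases "\<gamma> = 0") (auto simp: J_def)
    show "d (f \<omega>) (b \<omega> j) \<le> d (f \<omega>) (b \<omega> i) + \<bar>real j - real i\<bar> * \<delta>" if "\<omega> \<in> space M" for \<omega>
      using \<open>j \<in> J\<close> assms(9-11) unfolding J_def
      by (intro dist_to_chain_le[where x="b \<omega>" and lo=1 and hi=m, OF sym tri step[OF that]]) auto
  qed
  also have "\<dots> = expectation (\<lambda>\<omega>. real (card {j \<in> J. \<omega> \<in> A j}))"
    using meas unfolding A_def by (intro expectation_card_eq_sum_prob[symmetric]) (auto simp: J_def)
  also have "\<dots> = expectation (\<lambda>\<omega>. real (num_strong_matches d \<Psi> (f \<omega>) (b \<omega>) J))"
    by (rule Bochner_Integration.integral_cong) (simp_all add: A_def num_strong_matches_def strong_match_def)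
  finally show ?thesis
    by (simp add: J_def)
qed

end
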